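(* With the notation of the context, assume in addition that the distribution of $\tilde a$ is continuous. Then the equation \[ \Phi(L):=\int_{\mu_{\min}}^{\mu_{\max}}\mu\,\frac{1-\beta L\tilde h(\mu)}{1+L\tilde h(\mu)}\,dF_1(\mu\mid L)=0 \] has at least one solution $L$ in the interval $\big[1/(\beta\tilde h(\mu_{\min})),\,1/(\beta\tilde h(\mu_{\max}))\big]$, and has no solution $L>0$ outside this interval.
   Context: Fix $0<\mu_{\min}<\mu_{\max}<\infty$ and $\beta>0$. Let $f$ (utility of idleness) be concave, increasing, twice continuously differentiable, and $c$ (effort cost) convex, increasing, twice continuously differentiable with $0<c_{\min}\le c'(\mu)\le c_{\max}<\infty$ on $[\mu_{\min},\mu_{\max}]$. Let $h>0$ on $[\mu_{\min},\mu_{\max}]$ and $\tilde h(\mu)=h(\mu)/\mu$, assumed convex and strictly decreasing with $2\tilde h'(\mu)^2\le\tilde h(\mu)\tilde h''(\mu)$. A random triple $(\tilde\mu_{\min},\tilde\mu_{\max},\tilde a)$ satisfies $\mu_{\min}\le\tilde\mu_{\min}\le\tilde\mu_{\max}\le\mu_{\max}$ and $0<a_{\min}\le\tilde a\le a_{\max}<\infty$ a.s. For $L>0$ let $C(\mu,L)=-\frac{L f'((1+L\tilde h(\mu))^{-1})\tilde h'(\mu)}{(1+L\tilde h(\mu))^2c'(\mu)}$ and $F_1(\mu\mid L)=\mathbb P(\tilde\mu_{\max}\le\mu)+\mathbb P(\tilde\mu_{\max}>\mu,\ \tilde\mu_{\min}<\mu,\ \tilde a\ge C(\mu,L))$. 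*)

theory Defs
  imports "HOL-Probability.Probability"
begin

text \<open>The threshold C(mu,L); f', ht = h/mu, ht', c' are passed explicitly.\<close>
definition Cthr ::
  "(real \<Rightarrow> real) \<Rightarrow> (real \<Rightarrow> real) \<Rightarrow> (real \<Rightarrow> real) \<Rightarrow> (real \<Rightarrow> real) \<Rightarrow> real \<Rightarrow> real \<Rightarrow> real"
  where "Cthr f' ht ht' c' mu L =
     - (L * f' (inverse (1 + L * ht mu)) * ht' mu) / ((1 + L * ht mu)\<^sup>2 * c' mu)"

text \<open>F_1(mu | L), for a given threshold function Cf = (\<lambda>mu. C(mu,L)).\<close>
definition F1 ::
  "'w measure \<Rightarrow> ('w \<Rightarrow> real) \<Rightarrow> ('w \<Rightarrow> real) \<Rightarrow> ('w \<Rightarrow> real) \<Rightarrow> (real \<Rightarrow> real) \<Rightarrow> real \<Rightarrow> real"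
  where "F1 M mmin mmax A Cf mu =
     measure M {w \<in> space M. mmax w \<le> mu}
   + measure M {w \<in> space M. mmax w > mu \<and> mmin w < mu \<and> A w \<ge> Cf mu}"

definition stieltjes_measure :: "(real \<Rightarrow> real) \<Rightarrow> real measure"
  where "stieltjes_measure F = interval_measure (\<lambda>x. Lim (at_right x) F)"

end

theory Submission
  imports Defs
begin

(* The threshold factors as C(mu,L) = f'(u) u'/c'(mu), where u = (1 + L h~(mu))^-1 is the idle
   fraction. Concavity of f, convexity of c and the condition 2 h~'^2 <= h~ h~'' (which makes u
   concave in mu) render every factor nonnegative and nonincreasing in mu, so F1(.|L) is
   nondecreasing and its right-continuous version is the distribution function of a probability
   measure on [mu_min, mu_max]. Since a~ has no atoms, these distribution functions depend
   continuously on L at every point, so the measures converge weakly as L varies; as the integrand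
   is moreover Lipschitz in L, Phi is continuous on (0, oo). The integrand has the sign of
   1 - beta L h~(mu), where h~ decreases from h~(mu_min) to h~(mu_max): hence Phi is positive left
   of the interval, negative right of it, and the intermediate value theorem gives a root inside. *)

section \<open>Derivative signs, convexity and limits of probabilities\<close>

lemma mono_on_has_real_derivative_nonneg:
  fixes g :: "real \<Rightarrow> real"
  assumes "mono_on S g" and "(g has_real_derivative D) (at x within S)"
    and "x \<in> S" and "at x within S \<noteq> bot"
  shows "0 \<le> D"
proof -
  have "((\<lambda>y. (g y - g x) / (y - x)) \<longlongrightarrow> D) (at x within S)"
    using assms(2) by (simp add: has_field_derivative_iff)
  moreover have "0 \<le> (g y - g x) / (y - x)" if "y \<in> S" "y \<noteq> x" for y
    using mono_onD[OF assms(1)] assms(3) that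
    by (cases "x < y") (auto intro: divide_nonneg_pos divide_nonpos_neg)
  then have "eventually (\<lambda>y. 0 \<le> (g y - g x) / (y - x)) (at x within S)"
    by (auto simp: eventually_at_filter)
  ultimately show ?thesis
    using assms(4) by (rule tendsto_lowerbound)
qed

lemma convex_on_has_real_derivative_mono:
  fixes \<phi> :: "real \<Rightarrow> real"
  assumes cvx: "convex_on S \<phi>" and "x \<in> S" "y \<in> S" "x < y"
    and dx: "(\<phi> has_real_derivative Dx) (at x within S)"
    and dy: "(\<phi> has_real_derivative Dy) (at y within S)"
  shows "Dx \<le> Dy"
proof -
  define s where "s = (\<phi> x - \<phi> y) / (x - y)"
  have sub: "{x<..<y} \<subseteq> S"
    using atMostAtLeast_subset_convex[OF convex_on_imp_convex[OF cvx]] assms(2-4) by fastforce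
  have nontrivial: "at x within {x<..<y} \<noteq> bot" "at y within {x<..<y} \<noteq> bot"
    using \<open>x < y\<close> by (simp_all add: at_within_eq_bot_iff)
  have "((\<lambda>z. (\<phi> z - \<phi> x) / (z - x)) \<longlongrightarrow> Dx) (at x within {x<..<y})"
    using dx sub by (auto simp: has_field_derivative_iff intro: tendsto_within_subset)
  moreover have "(\<phi> z - \<phi> x) / (z - x) \<le> s" if "z \<in> {x<..<y}" for z
  proof -
    have "(\<phi> x - \<phi> z) / (x - z) \<le> s"
      using convex_on_slope_le(1)[OF cvx \<open>x \<in> S\<close> \<open>y \<in> S\<close>, of z] that by (simp add: s_def)
    then show ?thesis
      by (metis minus_diff_eq minus_divide_divide)
  qed
  then have "eventually (\<lambda>z. (\<phi> z - \<phi> x) / (z - x) \<le> s) (at x within {x<..<y})"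
    unfolding eventually_at_filter by (intro always_eventually) auto
  ultimately have "Dx \<le> s"
    using nontrivial(1) by (rule tendsto_upperbound)
  have "((\<lambda>z. (\<phi> z - \<phi> y) / (z - y)) \<longlongrightarrow> Dy) (at y within {x<..<y})"
    using dy sub by (auto simp: has_field_derivative_iff intro: tendsto_within_subset)
  moreover have "s \<le> (\<phi> z - \<phi> y) / (z - y)" if "z \<in> {x<..<y}" for z
    using convex_on_slope_le(2)[OF cvx \<open>x \<in> S\<close> \<open>y \<in> S\<close>, of z] that by (simp add: s_def)
  then have "eventually (\<lambda>z. s \<le> (\<phi> z - \<phi> y) / (z - y)) (at y within {x<..<y})"
    unfolding eventually_at_filter by (intro always_eventually) auto
  ultimately have "s \<le> Dy"
    using nontrivial(2) by (rule tendsto_lowerbound)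
  with \<open>Dx \<le> s\<close> show ?thesis by simp
qed

lemma at_within_Icc_neq_bot:
  fixes x a b :: real
  assumes "a < b" and "x \<in> {a..b}"
  shows "at x within {a..b} \<noteq> bot"
  using assms
  by (cases "x = a"; cases "x = b")
    (auto simp: at_within_Icc_at_right at_within_Icc_at_left at_within_Icc_at)

lemma eventually_le_iff_of_tendsto:
  fixes c a :: "'a::linorder_topology"
  assumes "(u \<longlongrightarrow> c) F" and "a \<noteq> c"
  shows "eventually (\<lambda>n. u n \<le> a \<longleftrightarrow> c \<le> a) F"
proof (cases "a < c")
  case True
  with order_tendstoD(1)[OF assms(1) True] show ?thesis
    by (auto elim: eventually_mono)
next
  case False
  with assms(2) have "c < a" by simp
  with order_tendstoD(2)[OF assms(1) this] show ?thesis
    by (auto elim: eventually_mono)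
qed

lemma (in finite_measure) tendsto_measure_of_AE_eventually_eq:
  assumes "\<And>n. X n \<in> sets M" and "Y \<in> sets M"
    and "AE w in M. eventually (\<lambda>n. w \<in> X n \<longleftrightarrow> w \<in> Y) sequentially"
  shows "(\<lambda>n. measure M (X n)) \<longlonglongrightarrow> measure M Y"
proof -
  have "(\<lambda>n. integral\<^sup>L M (indicator (X n))) \<longlonglongrightarrow> integral\<^sup>L M (indicator Y :: 'a \<Rightarrow> real)"
  proof (rule integral_dominated_convergence[where w = "\<lambda>_. 1"])
    show "AE w in M. (\<lambda>n. indicator (X n) w) \<longlonglongrightarrow> (indicator Y w :: real)"
      using assms(3) by eventually_elim
        (auto intro: tendsto_eventually elim: eventually_mono simp: indicator_def)
  qed (use assms(1,2) in \<open>auto simp: indicator_def\<close>)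
  then show ?thesis
    using assms(1,2) by (simp add: Int_absorb2 sets.sets_into_space)
qed

section \<open>Monotonicity and continuity of the threshold\<close>

locale threshold_model =
  fixes mu_min mu_max :: real and f f' c c' ht ht' ht'' :: "real \<Rightarrow> real"
  assumes mu_min_pos: "0 < mu_min" and mu_min_less_mu_max: "mu_min < mu_max"
    and f_concave: "concave_on {0..1} f" and f_mono: "mono_on {0..1} f"
    and f_deriv: "\<And>u. u \<in> {0..1} \<Longrightarrow> (f has_real_derivative f' u) (at u within {0..1})"
    and f'_cont: "continuous_on {0..1} f'"
    and c_convex: "convex_on {mu_min..mu_max} c"
    and c_deriv: "\<And>x. x \<in> {mu_min..mu_max} \<Longrightarrow>
      (c has_real_derivative c' x) (at x within {mu_min..mu_max})"
    and c'_pos: "\<And>x. x \<in> {mu_min..mu_max} \<Longrightarrow> 0 < c' x"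
    and c'_cont: "continuous_on {mu_min..mu_max} c'"
    and ht_pos: "\<And>x. x \<in> {mu_min..mu_max} \<Longrightarrow> 0 < ht x"
    and ht_deriv: "\<And>x. x \<in> {mu_min..mu_max} \<Longrightarrow>
      (ht has_real_derivative ht' x) (at x within {mu_min..mu_max})"
    and ht'_deriv: "\<And>x. x \<in> {mu_min..mu_max} \<Longrightarrow>
      (ht' has_real_derivative ht'' x) (at x within {mu_min..mu_max})"
    and ht_strict_antimono: "\<And>x y. x \<in> {mu_min..mu_max} \<Longrightarrow> y \<in> {mu_min..mu_max} \<Longrightarrow>
      x < y \<Longrightarrow> ht y < ht x"
    and ht_cond: "\<And>x. x \<in> {mu_min..mu_max} \<Longrightarrow> 2 * (ht' x)\<^sup>2 \<le> ht x * ht'' x"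
begin

abbreviation D :: "real set" where "D \<equiv> {mu_min..mu_max}"

abbreviation C :: "real \<Rightarrow> real \<Rightarrow> real" where "C L x \<equiv> Cthr f' ht ht' c' x L"

definition idle :: "real \<Rightarrow> real \<Rightarrow> real" where
  "idle L x = inverse (1 + L * ht x)"

(* the derivative of idle L in x *)
definition idle_rate :: "real \<Rightarrow> real \<Rightarrow> real" where
  "idle_rate L x = - L * ht' x / (1 + L * ht x)\<^sup>2"

lemma threshold_eq: "C L x = f' (idle L x) * idle_rate L x / c' x"
  unfolding Cthr_def idle_def idle_rate_def by (simp add: field_simps)

lemma continuous_on_ht: "continuous_on D ht"
  using ht_deriv by (rule DERIV_continuous_on)

lemma continuous_on_ht': "continuous_on D ht'"
  using ht'_deriv by (rule DERIV_continuous_on)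

lemma ht_antimono: "x \<in> D \<Longrightarrow> y \<in> D \<Longrightarrow> x \<le> y \<Longrightarrow> ht y \<le> ht x"
  using ht_strict_antimono by (cases "x = y") (auto simp: less_imp_le)

lemma ht_bounds: "m \<in> D \<Longrightarrow> ht mu_max \<le> ht m \<and> ht m \<le> ht mu_min"
  using ht_antimono mu_min_less_mu_max by auto

lemma ht'_nonpos: assumes "x \<in> D" shows "ht' x \<le> 0"
proof -
  have "mono_on D (\<lambda>x. - ht x)"
    by (auto intro!: mono_onI simp: ht_antimono)
  then have "0 \<le> - ht' x"
    using ht_deriv[OF assms] assms at_within_Icc_neq_bot[OF mu_min_less_mu_max assms]
    by (intro mono_on_has_real_derivative_nonneg[where S = D and g = "\<lambda>x. - ht x"])
      (auto intro!: derivative_eq_intros)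
  then show ?thesis by simp
qed

lemma ht''_nonneg: assumes "x \<in> D" shows "0 \<le> ht'' x"
proof -
  have "0 \<le> ht x * ht'' x"
    using ht_cond[OF assms] zero_le_power2[of "ht' x"] by linarith
  then show ?thesis
    using ht_pos[OF assms] by (simp add: zero_le_mult_iff)
qed

lemma f'_nonneg: assumes "u \<in> {0..1}" shows "0 \<le> f' u"
  using f_mono f_deriv[OF assms] assms
  by (rule mono_on_has_real_derivative_nonneg) (use assms at_within_Icc_neq_bot[of 0 1 u] in simp)

lemma f'_antimono:
  assumes "u \<in> {0..1}" "v \<in> {0..1}" "u \<le> v"
  shows "f' v \<le> f' u"
proof (cases "u = v")
  case False
  have "- f' u \<le> - f' v"
  proof (rule convex_on_has_real_derivative_mono
      [where S = "{0..1}" and \<phi> = "\<lambda>x. - f x" and x = u and y = v])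
    show "convex_on {0..1} (\<lambda>x. - f x)"
      using f_concave by (simp add: concave_on_def)
  qed (use assms False f_deriv in \<open>auto intro!: derivative_eq_intros\<close>)
  then show ?thesis by simp
qed simp

lemma c'_mono: "x \<in> D \<Longrightarrow> y \<in> D \<Longrightarrow> x \<le> y \<Longrightarrow> c' x \<le> c' y"
  using convex_on_has_real_derivative_mono[OF c_convex _ _ _ c_deriv c_deriv]
  by (cases "x = y") auto

lemma one_plus_L_ht_pos: "0 \<le> L \<Longrightarrow> x \<in> D \<Longrightarrow> 0 < 1 + L * ht x"
  using ht_pos[of x] by (simp add: add_pos_nonneg)

lemma idle_in_unit: "0 \<le> L \<Longrightarrow> x \<in> D \<Longrightarrow> idle L x \<in> {0..1}"
  using one_plus_L_ht_pos[of L x] ht_pos[of x] by (simp add: idle_def inverse_le_1_iff)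

lemma idle_mono: "0 \<le> L \<Longrightarrow> x \<in> D \<Longrightarrow> y \<in> D \<Longrightarrow> x \<le> y \<Longrightarrow> idle L x \<le> idle L y"
  unfolding idle_def
  using one_plus_L_ht_pos[of L y] ht_antimono[of x y]
  by (intro le_imp_inverse_le) (auto intro: mult_left_mono)

lemma continuous_on_idle: "0 \<le> L \<Longrightarrow> continuous_on D (idle L)"
  unfolding idle_def
  by (intro continuous_intros continuous_on_ht) (use one_plus_L_ht_pos in force)

lemma continuous_on_idle_rate: "0 \<le> L \<Longrightarrow> continuous_on D (idle_rate L)"
  unfolding idle_rate_def
  by (intro continuous_intros continuous_on_ht continuous_on_ht') (use one_plus_L_ht_pos in force)

lemma idle_rate_nonneg: "0 \<le> L \<Longrightarrow> x \<in> D \<Longrightarrow> 0 \<le> idle_rate L x"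
  unfolding idle_rate_def using ht'_nonpos[of x]
  by (simp add: divide_nonpos_nonneg mult_nonneg_nonpos)

lemma has_real_derivative_idle_rate:
  assumes L: "0 \<le> L" and z: "z \<in> {mu_min<..<mu_max}"
  shows "(idle_rate L has_real_derivative
    L * (2 * L * (ht' z)\<^sup>2 - ht'' z * (1 + L * ht z)) / (1 + L * ht z) ^ 3) (at z)"
proof -
  have zD: "z \<in> D" and at_z: "at z within D = at z"
    using z by (auto intro: at_within_Icc_at)
  define d where "d = 1 + L * ht z"
  have d: "0 < d"
    unfolding d_def using one_plus_L_ht_pos[OF L zD] .
  have num: "((\<lambda>x. - L * ht' x) has_real_derivative - L * ht'' z) (at z)"
    using ht'_deriv[OF zD] by (intro DERIV_cmult) (simp add: at_z)
  have den: "((\<lambda>x. (1 + L * ht x)\<^sup>2) has_real_derivative 2 * d * (L * ht' z)) (at z)"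
    using DERIV_power[OF DERIV_add[OF DERIV_const DERIV_cmult[OF ht_deriv[OF zD]]], of 1 L 2]
    by (simp add: at_z d_def algebra_simps)
  have "idle_rate L = (\<lambda>x. - L * ht' x / (1 + L * ht x)\<^sup>2)"
    by (simp add: fun_eq_iff idle_rate_def)
  moreover have "(- L * ht'' z * d\<^sup>2 - - L * ht' z * (2 * d * (L * ht' z))) / (d\<^sup>2 * d\<^sup>2)
      = L * (2 * L * (ht' z)\<^sup>2 - ht'' z * d) / d ^ 3"
    using d by (simp add: field_simps power2_eq_square power3_eq_cube)
  ultimately show ?thesis
    using DERIV_divide[OF num den] d by (simp add: d_def)
qed

lemma idle_rate_antimono:
  assumes L: "0 \<le> L" and "x \<in> D" "y \<in> D" "x \<le> y"
  shows "idle_rate L y \<le> idle_rate L x"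
proof (rule DERIV_nonpos_imp_decreasing_open[OF \<open>x \<le> y\<close>])
  show "continuous_on {x..y} (idle_rate L)"
    using continuous_on_idle_rate[OF L] by (rule continuous_on_subset) (use assms in auto)
  fix z assume "x < z" "z < y"
  then have z: "z \<in> {mu_min<..<mu_max}" and zD: "z \<in> D"
    using assms by auto
  have "L * (2 * (ht' z)\<^sup>2) \<le> L * (ht z * ht'' z)"
    using ht_cond[OF zD] L by (rule mult_left_mono)
  also have "\<dots> \<le> ht'' z * (1 + L * ht z)"
    using ht''_nonneg[OF zD] by (simp add: algebra_simps)
  finally have "L * (2 * L * (ht' z)\<^sup>2 - ht'' z * (1 + L * ht z)) / (1 + L * ht z) ^ 3 \<le> 0"
    using L one_plus_L_ht_pos[OF L zD] by (simp add: mult_nonneg_nonpos divide_nonpos_pos)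
  with has_real_derivative_idle_rate[OF L z]
  show "\<exists>D'. (idle_rate L has_real_derivative D') (at z) \<and> D' \<le> 0"
    by blast
qed

lemma threshold_antimono:
  assumes L: "0 < L" and x: "x \<in> D" and y: "y \<in> D" and "x \<le> y"
  shows "C L y \<le> C L x"
proof -
  have idle_x: "idle L x \<in> {0..1}" and idle_y: "idle L y \<in> {0..1}"
    using L x y idle_in_unit by auto
  have "f' (idle L y) * idle_rate L y \<le> f' (idle L x) * idle_rate L x"
    using assms idle_x idle_y
    by (intro mult_mono f'_antimono idle_mono idle_rate_antimono idle_rate_nonneg f'_nonneg) auto
  moreover have "0 \<le> f' (idle L y) * idle_rate L y"
    using L y idle_y by (simp add: f'_nonneg idle_rate_nonneg)
  ultimately show ?thesis
    unfolding threshold_eq using assms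
    by (intro frac_le c'_pos c'_mono) (auto intro: order_trans)
qed

lemma continuous_on_threshold: assumes L: "0 < L" shows "continuous_on D (C L)"
proof -
  have "continuous_on D (\<lambda>x. f' (idle L x))"
    using L
    by (intro continuous_on_compose2[OF f'_cont] continuous_on_idle image_subsetI idle_in_unit) auto
  then have "continuous_on D (\<lambda>x. f' (idle L x) * idle_rate L x / c' x)"
    using continuous_on_idle_rate L c'_pos
    by (intro continuous_intros c'_cont) (auto simp: less_imp_le less_imp_neq[symmetric])
  then show ?thesis
    by (simp add: threshold_eq)
qed

lemma continuous_on_threshold_L:
  assumes x: "x \<in> D" shows "continuous_on {0<..} (\<lambda>L. C L x)"
proof -
  have den: "\<forall>L\<in>{0<..}. 1 + L * ht x \<noteq> 0"
    using one_plus_L_ht_pos[OF _ x] by (metis greaterThan_iff less_imp_le less_irrefl)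
  have "continuous_on {0<..} (\<lambda>L. idle L x)"
    unfolding idle_def using den by (intro continuous_intros) auto
  then have "continuous_on {0<..} (\<lambda>L. f' (idle L x))"
    using x by (intro continuous_on_compose2[OF f'_cont] image_subsetI idle_in_unit) auto
  moreover have "continuous_on {0<..} (\<lambda>L. idle_rate L x)"
    unfolding idle_rate_def using den by (intro continuous_intros) auto
  ultimately have "continuous_on {0<..} (\<lambda>L. f' (idle L x) * idle_rate L x / c' x)"
    using c'_pos[OF x] by (intro continuous_intros) auto
  then show ?thesis
    by (simp add: threshold_eq)
qed

end

section \<open>The distribution F1 and its Lebesgue-Stieltjes measure\<close>

locale random_triple_model = threshold_model mu_min mu_max f f' c c' ht ht' ht'' + prob_space M
  for mu_min mu_max :: real and f f' c c' ht ht' ht'' :: "real \<Rightarrow> real" and M :: "'w measure" +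
  fixes mmin mmax A :: "'w \<Rightarrow> real" and beta :: real
  assumes beta_pos: "0 < beta"
    and mmin_measurable[measurable]: "mmin \<in> borel_measurable M"
    and mmax_measurable[measurable]: "mmax \<in> borel_measurable M"
    and A_measurable[measurable]: "A \<in> borel_measurable M"
    and triple_bounds: "AE w in M. mu_min \<le> mmin w \<and> mmin w \<le> mmax w \<and> mmax w \<le> mu_max"
    and A_atomless: "\<And>a. prob {w \<in> space M. A w = a} = 0"
begin

definition F1_set :: "real \<Rightarrow> real \<Rightarrow> 'w set" where
  "F1_set L x = {w \<in> space M. mmax w \<le> x \<or> (mmin w < x \<and> C L x \<le> A w)}"

(* The right-continuous version of F1(.|L): mmin w < x becomes mmin w \<le> x. *)
definition F1_rcont_set :: "real \<Rightarrow> real \<Rightarrow> 'w set" where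
  "F1_rcont_set L x = {w \<in> space M. mmax w \<le> x \<or> (mmin w \<le> x \<and> C L x \<le> A w)}"

definition F1_rcont :: "real \<Rightarrow> real \<Rightarrow> real" where
  "F1_rcont L x = prob (F1_rcont_set L x)"

lemma F1_set_sets[measurable]: "F1_set L x \<in> sets M"
  unfolding F1_set_def by measurable

lemma F1_rcont_set_sets[measurable]: "F1_rcont_set L x \<in> sets M"
  unfolding F1_rcont_set_def by measurable

lemma F1_eq_prob: "F1 M mmin mmax A (C L) x = prob (F1_set L x)"
proof -
  define E1 E2 where "E1 = {w \<in> space M. mmax w \<le> x}"
    and "E2 = {w \<in> space M. mmax w > x \<and> mmin w < x \<and> A w \<ge> C L x}"
  have "F1_set L x = E1 \<union> E2"
    by (auto simp: F1_set_def E1_def E2_def)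
  moreover have "prob (E1 \<union> E2) = prob E1 + prob E2"
    unfolding E1_def E2_def by (rule finite_measure_Union) (auto, measurable)
  ultimately show ?thesis
    unfolding F1_def E1_def E2_def by simp
qed

lemma AE_A_neq: "AE w in M. A w \<noteq> a"
  using prob_Collect_eq_0[of "\<lambda>w. A w = a"] A_atomless by simp

lemma eventually_F1_sets_right:
  assumes L: "0 < L" and S: "S \<longlonglongrightarrow> x" "\<And>n. x < S n"
    and w: "mu_min \<le> mmin w" "mmin w \<le> mmax w" "mmax w \<le> mu_max" and A_w: "A w \<noteq> C L x"
  shows "eventually (\<lambda>n. (w \<in> F1_set L (S n) \<longleftrightarrow> w \<in> F1_rcont_set L x)
    \<and> (w \<in> F1_rcont_set L (S n) \<longleftrightarrow> w \<in> F1_rcont_set L x)) sequentially"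
proof (cases "mmax w \<le> x")
  case True
  with S(2) have "mmax w \<le> S n" for n
    by (meson less_imp_le order_trans)
  with True show ?thesis
    by (auto simp: F1_set_def F1_rcont_set_def intro!: always_eventually)
next
  case above: False
  then have below_mmax: "eventually (\<lambda>n. S n < mmax w) sequentially"
    using S(1) by (intro order_tendstoD(2)) auto
  show ?thesis
  proof (cases "mmin w \<le> x")
    case False
    then have "eventually (\<lambda>n. S n < mmin w) sequentially"
      using S(1) by (intro order_tendstoD(2)) auto
    with below_mmax show ?thesis
      by eventually_elim (use False above in \<open>auto simp: F1_set_def F1_rcont_set_def\<close>)
  next
    case True
    have mmin_below: "mmin w < S n" for n
      using True S(2)[of n] by simp
    from True above w have "x \<in> D"
      by auto
    moreover from below_mmax have "eventually (\<lambda>n. S n \<in> D) sequentially"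
      by eventually_elim (use mmin_below w in \<open>auto intro: less_imp_le order_trans\<close>)
    ultimately have "(\<lambda>n. C L (S n)) \<longlonglongrightarrow> C L x"
      by (intro continuous_on_tendsto_compose[OF continuous_on_threshold[OF L] S(1)])
    from below_mmax eventually_le_iff_of_tendsto[OF this A_w] show ?thesis
      by eventually_elim
        (use mmin_below True above in \<open>auto simp: F1_set_def F1_rcont_set_def less_imp_le\<close>)
  qed
qed

lemma AE_eventually_F1_sets_right:
  assumes L: "0 < L" and S: "S \<longlonglongrightarrow> x" "\<And>n. x < S n"
  shows "AE w in M. eventually (\<lambda>n. (w \<in> F1_set L (S n) \<longleftrightarrow> w \<in> F1_rcont_set L x)
    \<and> (w \<in> F1_rcont_set L (S n) \<longleftrightarrow> w \<in> F1_rcont_set L x)) sequentially"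
  using triple_bounds AE_A_neq[of "C L x"]
  by eventually_elim (rule eventually_F1_sets_right[OF L S]; simp)

lemma F1_tendsto_F1_rcont:
  assumes L: "0 < L" shows "(F1 M mmin mmax A (C L) \<longlongrightarrow> F1_rcont L x) (at_right x)"
proof (rule tendsto_at_right_sequentially[of x "x + 1"])
  fix S assume "\<And>n. x < S n" "S \<longlonglongrightarrow> x"
  from AE_eventually_F1_sets_right[OF L this(2,1)]
  show "(\<lambda>n. F1 M mmin mmax A (C L) (S n)) \<longlonglongrightarrow> F1_rcont L x"
    unfolding F1_eq_prob F1_rcont_def
    by (intro tendsto_measure_of_AE_eventually_eq) (auto elim: eventually_mono)
qed simp

lemma F1_rcont_right_continuous:
  assumes L: "0 < L" shows "continuous (at_right x) (F1_rcont L)"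
  unfolding continuous_within
proof (rule tendsto_at_right_sequentially[of x "x + 1"])
  fix S assume "\<And>n. x < S n" "S \<longlonglongrightarrow> x"
  from AE_eventually_F1_sets_right[OF L this(2,1)]
  show "(\<lambda>n. F1_rcont L (S n)) \<longlonglongrightarrow> F1_rcont L x"
    unfolding F1_rcont_def
    by (intro tendsto_measure_of_AE_eventually_eq) (auto elim: eventually_mono)
qed simp

lemma F1_rcont_mono:
  assumes L: "0 < L" and "x \<le> y"
  shows "F1_rcont L x \<le> F1_rcont L y"
  unfolding F1_rcont_def
proof (rule finite_measure_mono_AE)
  show "AE w in M. w \<in> F1_rcont_set L x \<longrightarrow> w \<in> F1_rcont_set L y"
    using triple_bounds
  proof eventually_elim
    case (elim w)
    show ?case
    proof (cases "mmax w \<le> y")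
      case False
      with elim \<open>x \<le> y\<close> have "mmin w \<le> x \<Longrightarrow> C L y \<le> C L x"
        by (intro threshold_antimono[OF L]) auto
      with False \<open>x \<le> y\<close> show ?thesis
        by (auto simp: F1_rcont_set_def)
    qed (simp add: F1_rcont_set_def)
  qed
qed simp

lemma F1_rcont_eq_0: "x < mu_min \<Longrightarrow> F1_rcont L x = 0"
  unfolding F1_rcont_def F1_rcont_set_def
  by (rule prob_eq_0_AE) (use triple_bounds in \<open>eventually_elim, auto\<close>)

lemma F1_rcont_eq_1:
  assumes "mu_max \<le> x" shows "F1_rcont L x = 1"
proof -
  have "AE w in M. w \<in> F1_rcont_set L x"
    using triple_bounds AE_space by eventually_elim (use assms in \<open>auto simp: F1_rcont_set_def\<close>)
  then show ?thesis
    by (simp add: F1_rcont_def AE_in_set_eq_1)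
qed

lemma F1_rcont_at_bot: "(F1_rcont L \<longlongrightarrow> 0) at_bot"
  by (rule tendsto_eventually)
    (auto simp: eventually_at_bot_linorder F1_rcont_eq_0 intro!: exI[of _ "mu_min - 1"])

lemma F1_rcont_at_top: "(F1_rcont L \<longlongrightarrow> 1) at_top"
  by (rule tendsto_eventually)
    (auto simp: eventually_at_top_linorder F1_rcont_eq_1 intro!: exI[of _ mu_max])

lemma F1_rcont_tendsto_L:
  assumes Ls: "Ls \<longlonglongrightarrow> L" "\<And>n. 0 < Ls n" and L: "0 < L"
  shows "(\<lambda>n. F1_rcont (Ls n) x) \<longlonglongrightarrow> F1_rcont L x"
  unfolding F1_rcont_def
proof (rule tendsto_measure_of_AE_eventually_eq)
  show "AE w in M. eventually (\<lambda>n. w \<in> F1_rcont_set (Ls n) x \<longleftrightarrow> w \<in> F1_rcont_set L x) sequentially"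
    using triple_bounds AE_A_neq[of "C L x"]
  proof eventually_elim
    case (elim w)
    show ?case
    proof (cases "mmin w \<le> x \<and> x < mmax w")
      case True
      with elim have "x \<in> D" by auto
      then have "(\<lambda>n. C (Ls n) x) \<longlonglongrightarrow> C L x"
        using Ls L by (intro continuous_on_tendsto_compose[OF continuous_on_threshold_L]) auto
      from eventually_le_iff_of_tendsto[OF this, of "A w"] elim show ?thesis
        by (auto simp: F1_rcont_set_def elim: eventually_mono)
    qed (auto simp: F1_rcont_set_def)
  qed
qed simp_all

definition F1_dist :: "real \<Rightarrow> real measure" where
  "F1_dist L = interval_measure (F1_rcont L)"

lemma real_distribution_F1_dist: "0 < L \<Longrightarrow> real_distribution (F1_dist L)"
  unfolding F1_dist_def
  by (intro real_distribution_interval_measure F1_rcont_mono F1_rcont_right_continuous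
      F1_rcont_at_bot F1_rcont_at_top)

lemma cdf_F1_dist: "0 < L \<Longrightarrow> cdf (F1_dist L) = F1_rcont L"
  unfolding F1_dist_def
  by (intro cdf_interval_measure F1_rcont_mono F1_rcont_right_continuous F1_rcont_at_bot)

lemma stieltjes_measure_F1:
  assumes L: "0 < L" shows "stieltjes_measure (F1 M mmin mmax A (C L)) = F1_dist L"
proof -
  have "(\<lambda>x. Lim (at_right x) (F1 M mmin mmax A (C L))) = F1_rcont L"
    using F1_tendsto_F1_rcont[OF L] by (intro ext tendsto_Lim) simp_all
  then show ?thesis
    by (simp add: stieltjes_measure_def F1_dist_def)
qed

lemma AE_F1_dist_in_D:
  assumes L: "0 < L" shows "AE m in F1_dist L. m \<in> D"
proof -
  interpret F: real_distribution "F1_dist L"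
    using L by (rule real_distribution_F1_dist)
  have "(F1_rcont L \<longlongrightarrow> F.prob {..<mu_min}) (at_left mu_min)"
    using finite_borel_measure.cdf_at_left[OF F.finite_borel_measure_M, of mu_min]
    by (simp add: cdf_F1_dist[OF L])
  moreover have "(F1_rcont L \<longlongrightarrow> 0) (at_left mu_min)"
    by (rule tendsto_eventually)
      (auto simp: eventually_at_filter F1_rcont_eq_0 intro: always_eventually)
  ultimately have below: "F.prob {..<mu_min} = 0"
    by (rule tendsto_unique[rotated]) simp
  have "D = {..mu_max} - {..<mu_min}"
    by auto
  then have "F.prob D = F.prob {..mu_max} - F.prob {..<mu_min}"
    using mu_min_less_mu_max by (simp add: F.finite_measure_Diff F.events_eq_borel subset_eq)
  also have "F.prob {..mu_max} = 1"
    using cdf_F1_dist[OF L] by (metis cdf_def F1_rcont_eq_1 order_refl)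
  finally have "F.prob D = 1"
    using below by simp
  then show ?thesis
    by (rule F.AE_prob_1)
qed

section \<open>Continuity and sign of Phi\<close>

definition integrand :: "real \<Rightarrow> real \<Rightarrow> real" where
  "integrand L m = m * (1 - beta * L * ht m) / (1 + L * ht m)"

(* Phi2 separates the two roles of L in Phi L = Phi2 L L. Clamping to D makes the integrand
   bounded and continuous on the whole line, as weak convergence requires. *)
definition Phi2 :: "real \<Rightarrow> real \<Rightarrow> real" where
  "Phi2 L L' = (\<integral>m. integrand L (clamp mu_min mu_max m) \<partial>F1_dist L')"

lemma clamp_in_D: "clamp mu_min mu_max m \<in> D"
  using clamp_in_interval[of mu_min mu_max m] mu_min_less_mu_max by simp

lemma clamp_eq_self: "m \<in> D \<Longrightarrow> clamp mu_min mu_max m = m"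
  using clamp_cancel_cbox[of m mu_min mu_max] by simp

lemma continuous_on_integrand: "0 \<le> L \<Longrightarrow> continuous_on D (integrand L)"
  unfolding integrand_def
  by (intro continuous_intros continuous_on_ht) (use one_plus_L_ht_pos in force)

lemma borel_measurable_integrand_clamp:
  "0 \<le> L \<Longrightarrow> 0 < L' \<Longrightarrow> (\<lambda>m. integrand L (clamp mu_min mu_max m)) \<in> borel_measurable (F1_dist L')"
  using continuous_on_integrand
  by (auto intro!: borel_measurable_continuous_onI clamp_continuous_on
      simp: F1_dist_def measurable_cong_sets[OF sets_interval_measure refl])

lemma integrand_clamp_bounded:
  assumes "0 \<le> L" obtains B where "\<And>m. \<bar>integrand L (clamp mu_min mu_max m)\<bar> \<le> B"
proof -
  have "compact (integrand L ` D)"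
    using continuous_on_integrand[OF assms] by (intro compact_continuous_image) simp_all
  then obtain B where "\<forall>y \<in> integrand L ` D. norm y \<le> B"
    by (meson compact_imp_bounded bounded_iff)
  then have "\<bar>integrand L (clamp mu_min mu_max m)\<bar> \<le> B" for m
    using clamp_in_D by auto
  then show ?thesis
    by (rule that)
qed

lemma integrable_integrand_clamp:
  assumes L: "0 \<le> L" and L': "0 < L'"
  shows "integrable (F1_dist L') (\<lambda>m. integrand L (clamp mu_min mu_max m))"
proof -
  interpret F: real_distribution "F1_dist L'"
    using L' by (rule real_distribution_F1_dist)
  obtain B where "\<And>m. \<bar>integrand L (clamp mu_min mu_max m)\<bar> \<le> B"
    using integrand_clamp_bounded L by blast
  then show ?thesis
    using borel_measurable_integrand_clamp[OF L L'] by (intro F.integrable_const_bound) auto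
qed

lemma integrand_lipschitz:
  assumes "0 \<le> L" "0 \<le> L'" and m: "m \<in> D"
  shows "\<bar>integrand L m - integrand L' m\<bar> \<le> mu_max * (1 + beta) * ht mu_min * \<bar>L - L'\<bar>"
proof -
  define t where "t = ht m"
  have t: "0 < t" "t \<le> ht mu_min"
    using ht_pos[OF m] ht_bounds[OF m] by (auto simp: t_def)
  have d: "1 \<le> 1 + L * t" "1 \<le> 1 + L' * t"
    using assms t by auto
  have "integrand L m - integrand L' m
      = m * (1 + beta) * t * (L' - L) / ((1 + L * t) * (1 + L' * t))"
    using d unfolding integrand_def t_def[symmetric]
    by (simp add: divide_simps) (simp add: algebra_simps)
  then have "\<bar>integrand L m - integrand L' m\<bar>
      = m * (1 + beta) * t * \<bar>L - L'\<bar> / ((1 + L * t) * (1 + L' * t))"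
    using d t m mu_min_pos beta_pos by (simp add: abs_mult abs_minus_commute)
  also have "\<dots> \<le> m * (1 + beta) * t * \<bar>L - L'\<bar>"
  proof -
    have "0 \<le> m * (1 + beta) * t * \<bar>L - L'\<bar>"
      using t m mu_min_pos beta_pos by simp
    moreover have "1 \<le> (1 + L * t) * (1 + L' * t)"
      using mult_mono[OF d] d by simp
    ultimately show ?thesis
      using frac_le[of _ _ 1] by fastforce
  qed
  also have "\<dots> \<le> mu_max * (1 + beta) * ht mu_min * \<bar>L - L'\<bar>"
    using m t mu_min_pos beta_pos by (intro mult_right_mono mult_mono) auto
  finally show ?thesis .
qed

lemma Phi2_lipschitz:
  assumes L: "0 \<le> L" and L': "0 \<le> L'" and L'': "0 < L''"
  shows "\<bar>Phi2 L L'' - Phi2 L' L''\<bar> \<le> mu_max * (1 + beta) * ht mu_min * \<bar>L - L'\<bar>"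
proof -
  interpret F: real_distribution "F1_dist L''"
    using L'' by (rule real_distribution_F1_dist)
  let ?K = "mu_max * (1 + beta) * ht mu_min * \<bar>L - L'\<bar>"
  let ?g = "\<lambda>m. integrand L (clamp mu_min mu_max m) - integrand L' (clamp mu_min mu_max m)"
  have int: "integrable (F1_dist L'') ?g"
    using L L' L'' by (intro Bochner_Integration.integrable_diff integrable_integrand_clamp)
  have g_bound: "\<bar>?g m\<bar> \<le> ?K" for m
    using L L' clamp_in_D by (rule integrand_lipschitz)
  have "Phi2 L L'' - Phi2 L' L'' = integral\<^sup>L (F1_dist L'') ?g"
    unfolding Phi2_def using L L' L''
    by (intro Bochner_Integration.integral_diff[symmetric] integrable_integrand_clamp)
  moreover have "integral\<^sup>L (F1_dist L'') ?g \<le> ?K"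
    using abs_le_D1[OF g_bound] by (intro F.integral_le_const int AE_I2)
  moreover have "- ?K \<le> ?g m" for m
    using g_bound[of m] by linarith
  then have "- ?K \<le> integral\<^sup>L (F1_dist L'') ?g"
    by (intro F.integral_ge_const int AE_I2)
  ultimately show ?thesis
    by simp
qed

lemma Phi2_tendsto_dist:
  assumes Ls: "Ls \<longlonglongrightarrow> L" "\<And>n. 0 < Ls n" and L: "0 < L" and a: "0 \<le> a"
  shows "(\<lambda>n. Phi2 a (Ls n)) \<longlonglongrightarrow> Phi2 a L"
proof -
  obtain B where "\<And>m. \<bar>integrand a (clamp mu_min mu_max m)\<bar> \<le> B"
    using integrand_clamp_bounded a by blast
  moreover have "weak_conv_m (\<lambda>n. F1_dist (Ls n)) (F1_dist L)"
    unfolding weak_conv_m_def weak_conv_def cdf_F1_dist[OF L] cdf_F1_dist[OF Ls(2)]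
    using F1_rcont_tendsto_L[OF Ls L] by blast
  ultimately show ?thesis
    unfolding Phi2_def using continuous_on_integrand[OF a]
    by (intro weak_conv_imp_integral_bdd_continuous_conv real_distribution_F1_dist Ls L
        clamp_continuous_at) auto
qed

lemma continuous_on_Phi2_diagonal: "continuous_on {0<..} (\<lambda>L. Phi2 L L)"
proof (rule continuous_on_sequentiallyI)
  fix Ls :: "nat \<Rightarrow> real" and L :: real
  assume Ls_pos': "\<forall>n. Ls n \<in> {0<..}" and L': "L \<in> {0<..}" and Ls: "Ls \<longlonglongrightarrow> L"
  have Ls_pos: "0 < Ls n" for n
    using Ls_pos' by simp
  have L: "0 < L"
    using L' by simp
  define K where "K = mu_max * (1 + beta) * ht mu_min"
  have "(\<lambda>n. K * \<bar>Ls n - L\<bar>) \<longlonglongrightarrow> K * \<bar>L - L\<bar>"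
    by (intro tendsto_intros Ls)
  then have K_lim: "(\<lambda>n. K * \<bar>Ls n - L\<bar>) \<longlonglongrightarrow> 0"
    by simp
  have "norm (Phi2 (Ls n) (Ls n) - Phi2 L (Ls n)) \<le> K * \<bar>Ls n - L\<bar>" for n
    unfolding K_def real_norm_def using Ls_pos[of n] L by (intro Phi2_lipschitz) auto
  then have "(\<lambda>n. Phi2 (Ls n) (Ls n) - Phi2 L (Ls n)) \<longlonglongrightarrow> 0"
    by (intro Lim_null_comparison[OF always_eventually K_lim] allI)
  moreover have "(\<lambda>n. Phi2 L (Ls n)) \<longlonglongrightarrow> Phi2 L L"
    using Ls Ls_pos L by (rule Phi2_tendsto_dist) (use L in simp)
  ultimately have "(\<lambda>n. Phi2 (Ls n) (Ls n) - Phi2 L (Ls n) + Phi2 L (Ls n)) \<longlonglongrightarrow> 0 + Phi2 L L"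
    by (rule tendsto_add)
  then show "(\<lambda>n. Phi2 (Ls n) (Ls n)) \<longlonglongrightarrow> Phi2 L L"
    by simp
qed

lemma Phi_eq_Phi2:
  assumes L: "0 < L"
  shows "(LINT m:D | stieltjes_measure (F1 M mmin mmax A (C L)). integrand L m) = Phi2 L L"
proof -
  have "(LINT m:D | F1_dist L. integrand L m)
      = (LINT m:D | F1_dist L. integrand L (clamp mu_min mu_max m))"
    by (rule set_lebesgue_integral_cong) (auto simp: F1_dist_def clamp_eq_self)
  also have "\<dots> = Phi2 L L"
    unfolding set_lebesgue_integral_def Phi2_def
  proof (rule integral_cong_AE)
    show "(\<lambda>m. indicator D m *\<^sub>R integrand L (clamp mu_min mu_max m))
        \<in> borel_measurable (F1_dist L)"
      using borel_measurable_integrand_clamp[of L L] L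
      by (intro borel_measurable_scaleR borel_measurable_indicator) (auto simp: F1_dist_def)
    show "AE m in F1_dist L. indicator D m *\<^sub>R integrand L (clamp mu_min mu_max m)
        = integrand L (clamp mu_min mu_max m)"
      using AE_F1_dist_in_D[OF L] by eventually_elim simp
  qed (use borel_measurable_integrand_clamp[of L L] L in simp)
  finally show ?thesis
    by (simp add: stieltjes_measure_F1[OF L])
qed

lemma integrand_lower_bound:
  assumes L: "0 \<le> L" and small: "beta * L * ht mu_min \<le> 1" and m: "m \<in> D"
  shows "mu_min * (1 - beta * L * ht mu_min) / (1 + L * ht mu_min) \<le> integrand L m"
proof -
  have t: "0 < ht m" "ht m \<le> ht mu_min"
    using ht_pos[OF m] ht_bounds[OF m] by auto
  have "beta * L * ht m \<le> beta * L * ht mu_min"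
    using t L beta_pos by (simp add: mult_left_mono)
  then have num: "mu_min * (1 - beta * L * ht mu_min) \<le> m * (1 - beta * L * ht m)"
    using m small mu_min_pos by (intro mult_mono) auto
  have "0 \<le> mu_min * (1 - beta * L * ht mu_min)"
    using small mu_min_pos by simp
  then show ?thesis
    unfolding integrand_def using num t L
    by (intro frac_le) (auto intro: add_pos_nonneg mult_left_mono)
qed

lemma integrand_upper_bound:
  assumes L: "0 \<le> L" and large: "1 \<le> beta * L * ht mu_max" and m: "m \<in> D"
  shows "integrand L m \<le> mu_min * (1 - beta * L * ht mu_max) / (1 + L * ht mu_min)"
proof -
  have t: "0 < ht m" "ht mu_max \<le> ht m" "ht m \<le> ht mu_min"
    using ht_pos[OF m] ht_bounds[OF m] by auto
  have "beta * L * ht mu_max \<le> beta * L * ht m"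
    using t L beta_pos by (simp add: mult_left_mono)
  then have num: "mu_min * (beta * L * ht mu_max - 1) \<le> m * (beta * L * ht m - 1)"
    using m large mu_min_pos by (intro mult_mono) auto
  have "0 \<le> mu_min * (beta * L * ht mu_max - 1)"
    using large mu_min_pos by simp
  then have "mu_min * (beta * L * ht mu_max - 1) / (1 + L * ht mu_min)
      \<le> m * (beta * L * ht m - 1) / (1 + L * ht m)"
    using num t L by (intro frac_le) (auto intro: add_pos_nonneg mult_left_mono)
  moreover have "integrand L m = - (m * (beta * L * ht m - 1) / (1 + L * ht m))"
    unfolding integrand_def by (simp add: algebra_simps minus_divide_left)
  moreover have "mu_min * (1 - beta * L * ht mu_max) / (1 + L * ht mu_min)
      = - (mu_min * (beta * L * ht mu_max - 1) / (1 + L * ht mu_min))"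
    by (simp add: algebra_simps minus_divide_left)
  ultimately show ?thesis
    by (metis neg_le_iff_le)
qed

lemma Phi2_nonneg_if_small:
  assumes L: "0 < L" and small: "beta * L * ht mu_min \<le> 1"
  shows "0 \<le> Phi2 L L" and "beta * L * ht mu_min < 1 \<Longrightarrow> 0 < Phi2 L L"
proof -
  interpret F: real_distribution "F1_dist L"
    using L by (rule real_distribution_F1_dist)
  have "mu_min * (1 - beta * L * ht mu_min) / (1 + L * ht mu_min) \<le> Phi2 L L"
    unfolding Phi2_def using L small clamp_in_D
    by (intro F.integral_ge_const integrable_integrand_clamp AE_I2 integrand_lower_bound) auto
  moreover have "0 < 1 + L * ht mu_min"
    using L mu_min_less_mu_max by (intro one_plus_L_ht_pos) auto
  ultimately show "0 \<le> Phi2 L L" and "beta * L * ht mu_min < 1 \<Longrightarrow> 0 < Phi2 L L"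
    using small mu_min_pos by (auto intro: order_trans[rotated] less_le_trans[rotated])
qed

lemma Phi2_nonpos_if_large:
  assumes L: "0 < L" and large: "1 \<le> beta * L * ht mu_max"
  shows "Phi2 L L \<le> 0" and "1 < beta * L * ht mu_max \<Longrightarrow> Phi2 L L < 0"
proof -
  interpret F: real_distribution "F1_dist L"
    using L by (rule real_distribution_F1_dist)
  have "Phi2 L L \<le> mu_min * (1 - beta * L * ht mu_max) / (1 + L * ht mu_min)"
    unfolding Phi2_def using L large clamp_in_D
    by (intro F.integral_le_const integrable_integrand_clamp AE_I2 integrand_upper_bound) auto
  moreover have "0 < 1 + L * ht mu_min"
    using L mu_min_less_mu_max by (intro one_plus_L_ht_pos) auto
  ultimately show "Phi2 L L \<le> 0" and "1 < beta * L * ht mu_max \<Longrightarrow> Phi2 L L < 0"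
    using large mu_min_pos
    by (auto simp: divide_nonpos_pos mult_nonneg_nonpos divide_neg_pos mult_pos_neg
        intro: order_trans le_less_trans)
qed

lemma Phi2_root:
  shows "(\<exists>L\<in>{1 / (beta * ht mu_min) .. 1 / (beta * ht mu_max)}. Phi2 L L = 0)"
    and "\<forall>L>0. Phi2 L L = 0 \<longrightarrow> L \<in> {1 / (beta * ht mu_min) .. 1 / (beta * ht mu_max)}"
proof -
  define L_lo L_hi where "L_lo = 1 / (beta * ht mu_min)" and "L_hi = 1 / (beta * ht mu_max)"
  have T: "0 < beta * ht mu_max" "beta * ht mu_max < beta * ht mu_min"
    using beta_pos ht_pos ht_strict_antimono[of mu_min mu_max] mu_min_less_mu_max by auto
  have lo_le: "beta * L * ht mu_min \<le> 1 \<longleftrightarrow> L \<le> L_lo"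
   and lo_less: "beta * L * ht mu_min < 1 \<longleftrightarrow> L < L_lo"
   and hi_le: "1 \<le> beta * L * ht mu_max \<longleftrightarrow> L_hi \<le> L"
   and hi_less: "1 < beta * L * ht mu_max \<longleftrightarrow> L_hi < L" for L
    using T unfolding L_lo_def L_hi_def
    by (simp_all add: pos_le_divide_eq pos_less_divide_eq pos_divide_le_eq pos_divide_less_eq
        ac_simps)
  have L_lo: "0 < L_lo" and L_lo_le_L_hi: "L_lo \<le> L_hi"
    using T unfolding L_lo_def L_hi_def by (auto intro: divide_left_mono)
  have "\<exists>L. L_lo \<le> L \<and> L \<le> L_hi \<and> Phi2 L L = 0"
  proof (rule IVT2')
    show "Phi2 L_hi L_hi \<le> 0"
      using L_lo L_lo_le_L_hi hi_le by (intro Phi2_nonpos_if_large) auto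
    show "0 \<le> Phi2 L_lo L_lo"
      using L_lo lo_le by (intro Phi2_nonneg_if_small) auto
    show "continuous_on {L_lo..L_hi} (\<lambda>L. Phi2 L L)"
      using L_lo by (intro continuous_on_subset[OF continuous_on_Phi2_diagonal]) auto
  qed (rule L_lo_le_L_hi)
  then show "\<exists>L\<in>{1 / (beta * ht mu_min) .. 1 / (beta * ht mu_max)}. Phi2 L L = 0"
    by (auto simp: L_lo_def L_hi_def)
  show "\<forall>L>0. Phi2 L L = 0 \<longrightarrow> L \<in> {1 / (beta * ht mu_min) .. 1 / (beta * ht mu_max)}"
  proof (intro allI impI)
    fix L assume "0 < L" "Phi2 L L = 0"
    then have "\<not> L < L_lo" and "\<not> L_hi < L"
      using Phi2_nonneg_if_small(2)[of L] Phi2_nonpos_if_large(2)[of L] lo_le lo_less hi_le hi_less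
      by (auto simp: less_imp_le)
    then show "L \<in> {1 / (beta * ht mu_min) .. 1 / (beta * ht mu_max)}"
      by (simp add: L_lo_def L_hi_def)
  qed
qed

end

theorem proposition2:
  fixes M :: "'w measure"
    and mmin mmax A :: "'w \<Rightarrow> real"
    and mu_min mu_max beta a_min a_max c_min c_max :: real
    and f f' f'' c c' c'' h ht' ht'' :: "real \<Rightarrow> real"
  assumes mu_bounds: "0 < mu_min" "mu_min < mu_max"
    and beta_pos: "beta > 0"
    and f_concave: "concave_on {0..1} f"
    and f_mono: "mono_on {0..1} f"
    and f_d1: "\<forall>x\<in>{0..1}. (f has_real_derivative f' x) (at x within {0..1})"
    and f_d2: "\<forall>x\<in>{0..1}. (f' has_real_derivative f'' x) (at x within {0..1})"
    and f_c2: "continuous_on {0..1} f''"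
    and c_convex: "convex_on {mu_min..mu_max} c"
    and c_mono: "mono_on {mu_min..mu_max} c"
    and c_d1: "\<forall>x\<in>{mu_min..mu_max}. (c has_real_derivative c' x) (at x within {mu_min..mu_max})"
    and c_d2: "\<forall>x\<in>{mu_min..mu_max}. (c' has_real_derivative c'' x) (at x within {mu_min..mu_max})"
    and c_c2: "continuous_on {mu_min..mu_max} c''"
    and c'_bounds: "0 < c_min"
       "\<forall>x\<in>{mu_min..mu_max}. c_min \<le> c' x \<and> c' x \<le> c_max"
    and h_pos: "\<forall>x\<in>{mu_min..mu_max}. h x > 0"
    and ht_d1: "\<forall>x\<in>{mu_min..mu_max}. ((\<lambda>m. h m / m) has_real_derivative ht' x) (at x within {mu_min..mu_max})"
    and ht_d2: "\<forall>x\<in>{mu_min..mu_max}. (ht' has_real_derivative ht'' x) (at x within {mu_min..mu_max})"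
    and ht_convex: "convex_on {mu_min..mu_max} (\<lambda>m. h m / m)"
    and ht_strict_dec: "\<forall>x\<in>{mu_min..mu_max}. \<forall>y\<in>{mu_min..mu_max}. x < y \<longrightarrow> h y / y < h x / x"
    and ht_cond: "\<forall>x\<in>{mu_min..mu_max}. 2 * (ht' x)\<^sup>2 \<le> (h x / x) * ht'' x"
    and P: "prob_space M"
    and meas: "mmin \<in> borel_measurable M" "mmax \<in> borel_measurable M" "A \<in> borel_measurable M"
    and triple_bounds: "AE w in M. mu_min \<le> mmin w \<and> mmin w \<le> mmax w \<and> mmax w \<le> mu_max"
    and a_bounds: "0 < a_min" "AE w in M. a_min \<le> A w \<and> A w \<le> a_max"
    and A_continuous: "\<forall>x. measure M {w \<in> space M. A w = x} = 0"
  defines "Phi \<equiv> \<lambda>L. LINT m:{mu_min..mu_max} |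
              stieltjes_measure (F1 M mmin mmax A (\<lambda>mu. Cthr f' (\<lambda>m. h m / m) ht' c' mu L)).
              m * (1 - beta * L * (h m / m)) / (1 + L * (h m / m))"
  shows "(\<exists>L\<in>{1 / (beta * (h mu_min / mu_min)) .. 1 / (beta * (h mu_max / mu_max))}. Phi L = 0)
       \<and> (\<forall>L>0. Phi L = 0 \<longrightarrow> L \<in> {1 / (beta * (h mu_min / mu_min)) .. 1 / (beta * (h mu_max / mu_max))})"
proof -
  have f'_cont: "continuous_on {0..1} f'" and c'_cont: "continuous_on {mu_min..mu_max} c'"
    using f_d2 c_d2 by (auto intro: DERIV_continuous_on)
  have c'_pos: "0 < c' x" and ht_pos: "0 < h x / x" if "x \<in> {mu_min..mu_max}" for x
    using that c'_bounds h_pos mu_bounds by (auto intro: less_le_trans)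
  interpret random_triple_model mu_min mu_max f f' c c' "\<lambda>m. h m / m" ht' ht'' M mmin mmax A beta
    by (intro random_triple_model.intro threshold_model.intro random_triple_model_axioms.intro P)
      (use mu_bounds beta_pos f_concave f_mono f_d1 f'_cont c_convex c_d1 c'_pos c'_cont ht_pos
        ht_d1 ht_d2 ht_strict_dec ht_cond meas triple_bounds A_continuous in blast)+
  have "Phi L = Phi2 L L" if "0 < L" for L
    using Phi_eq_Phi2[OF that] by (simp add: Phi_def integrand_def)
  moreover have "0 < 1 / (beta * (h mu_min / mu_min))"
    using beta_pos mu_bounds h_pos by simp
  ultimately show ?thesis
    using Phi2_root by (force intro: less_le_trans)
qed

end
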